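(* Let $G$ be a torsion-free group acting $\kappa$-acylindrically on a simplicial tree $T$. Let $g,h\in G$ be loxodromic with axes $\alpha_g,\alpha_h$ and translation lengths $\lambda_T(g),\lambda_T(h)$. If $g$ and $h$ do not have a common nontrivial power, then $\mathrm{diam}_T(\alpha_g\cap\alpha_h)\le\kappa+\lambda_T(g)\cdot\lambda_T(h)$.
   Context: An action on a simplicial tree is $\kappa$-acylindrical if the pointwise stabiliser of every edge path of length at least $\kappa+1$ is trivial. For a loxodromic element $g$, its axis $\alpha_g$ is the unique $g$-invariant bi-infinite geodesic on which $g$ translates, and $\lambda_T(g)>0$ is its translation length. Common nontrivial power: $g^m=h^n\neq1$ for some integers $m,n$. *)

theory Defs
  imports "HOL-Algebra.Group"
begin

text \<open>Simplicial trees: the vertex set is the whole type 'v, adjacency is a symmetric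
irreflexive relation E.  Paths are given as lists of vertices.\<close>

definition is_walk :: "('v \<Rightarrow> 'v \<Rightarrow> bool) \<Rightarrow> 'v list \<Rightarrow> bool" where
  "is_walk E p \<longleftrightarrow> p \<noteq> [] \<and> (\<forall>i. Suc i < length p \<longrightarrow> E (p ! i) (p ! Suc i))"

text \<open>Edge path without repeated vertices (in a tree: a geodesic segment);
a list of length n+1 is an edge path of length n.\<close>
definition is_path :: "('v \<Rightarrow> 'v \<Rightarrow> bool) \<Rightarrow> 'v list \<Rightarrow> bool" where
  "is_path E p \<longleftrightarrow> is_walk E p \<and> distinct p"

definition tree_graph :: "('v \<Rightarrow> 'v \<Rightarrow> bool) \<Rightarrow> bool" where
  "tree_graph E \<longleftrightarrow>
     (\<forall>u v. E u v \<longrightarrow> E v u) \<and> (\<forall>v. \<not> E v v) \<and>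
     (\<forall>u v. \<exists>p. is_walk E p \<and> hd p = u \<and> last p = v) \<and>
     \<not> (\<exists>p. is_path E p \<and> length p \<ge> 3 \<and> E (last p) (hd p))"

definition tdist :: "('v \<Rightarrow> 'v \<Rightarrow> bool) \<Rightarrow> 'v \<Rightarrow> 'v \<Rightarrow> nat" where
  "tdist E u v = (LEAST n. \<exists>p. is_walk E p \<and> hd p = u \<and> last p = v \<and> length p = Suc n)"

definition tree_action :: "('g, 'b) monoid_scheme \<Rightarrow> ('v \<Rightarrow> 'v \<Rightarrow> bool) \<Rightarrow> ('g \<Rightarrow> 'v \<Rightarrow> 'v) \<Rightarrow> bool" where
  "tree_action G E \<phi> \<longleftrightarrow> group G \<and> tree_graph E \<and>
     (\<forall>g\<in>carrier G. bij (\<phi> g) \<and> (\<forall>u v. E (\<phi> g u) (\<phi> g v) \<longleftrightarrow> E u v)) \<and>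
     (\<forall>v. \<phi> \<one>\<^bsub>G\<^esub> v = v) \<and>
     (\<forall>g\<in>carrier G. \<forall>h\<in>carrier G. \<forall>v. \<phi> (g \<otimes>\<^bsub>G\<^esub> h) v = \<phi> g (\<phi> h v))"

definition torsion_free :: "('g, 'b) monoid_scheme \<Rightarrow> bool" where
  "torsion_free G \<longleftrightarrow> (\<forall>g\<in>carrier G. \<forall>n::nat. n > 0 \<longrightarrow> g [^]\<^bsub>G\<^esub> n = \<one>\<^bsub>G\<^esub> \<longrightarrow> g = \<one>\<^bsub>G\<^esub>)"

text \<open>kappa-acylindrical: pointwise stabiliser of every edge path of length at least
kappa+1 (i.e. at least kappa+2 vertices) is trivial.\<close>
definition acylindrical :: "('g, 'b) monoid_scheme \<Rightarrow> ('v \<Rightarrow> 'v \<Rightarrow> bool) \<Rightarrow> ('g \<Rightarrow> 'v \<Rightarrow> 'v) \<Rightarrow> nat \<Rightarrow> bool" where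
  "acylindrical G E \<phi> \<kappa> \<longleftrightarrow>
     (\<forall>p. is_path E p \<and> length p \<ge> \<kappa> + 2 \<longrightarrow>
        {g\<in>carrier G. \<forall>v\<in>set p. \<phi> g v = v} = {\<one>\<^bsub>G\<^esub>})"

definition biinf_geodesic :: "('v \<Rightarrow> 'v \<Rightarrow> bool) \<Rightarrow> (int \<Rightarrow> 'v) \<Rightarrow> bool" where
  "biinf_geodesic E f \<longleftrightarrow> (\<forall>i j. tdist E (f i) (f j) = nat \<bar>i - j\<bar>)"

definition translates_along :: "('v \<Rightarrow> 'v \<Rightarrow> bool) \<Rightarrow> ('g \<Rightarrow> 'v \<Rightarrow> 'v) \<Rightarrow> 'g \<Rightarrow> (int \<Rightarrow> 'v) \<Rightarrow> bool" where
  "translates_along E \<phi> g f \<longleftrightarrow> biinf_geodesic E f \<and> (\<exists>k>0. \<forall>i. \<phi> g (f i) = f (i + k))"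

definition loxodromic :: "('g, 'b) monoid_scheme \<Rightarrow> ('v \<Rightarrow> 'v \<Rightarrow> bool) \<Rightarrow> ('g \<Rightarrow> 'v \<Rightarrow> 'v) \<Rightarrow> 'g \<Rightarrow> bool" where
  "loxodromic G E \<phi> g \<longleftrightarrow> g \<in> carrier G \<and> (\<exists>f. translates_along E \<phi> g f)"

text \<open>The axis: vertex set of the (unique) g-invariant bi-infinite geodesic on which g translates.\<close>
definition axis :: "('v \<Rightarrow> 'v \<Rightarrow> bool) \<Rightarrow> ('g \<Rightarrow> 'v \<Rightarrow> 'v) \<Rightarrow> 'g \<Rightarrow> 'v set" where
  "axis E \<phi> g = \<Union>{range f | f. translates_along E \<phi> g f}"

definition transl_len :: "('v \<Rightarrow> 'v \<Rightarrow> bool) \<Rightarrow> ('g \<Rightarrow> 'v \<Rightarrow> 'v) \<Rightarrow> 'g \<Rightarrow> nat" where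
  "transl_len E \<phi> g = (LEAST n. \<exists>v. tdist E v (\<phi> g v) = n)"

end

theory Submission
  imports Defs
begin

text \<open>
  Suppose the axes of g and h share a segment of length D > \<kappa> + \<lambda>(g)\<lambda>(h). On it
  both g^\<lambda>(h) and h^(\<plusminus>\<lambda>(g)) translate by \<lambda>(g)\<lambda>(h) in the same direction, so they
  agree on a subsegment of length D - \<lambda>(g)\<lambda>(h) > \<kappa>, and acylindricity makes them
  equal: a common nontrivial power. The geometric input is uniqueness of paths in a tree,
  which shows that the axis of g is the vertex set of any geodesic along which g translates,
  and that two axes meet in a common segment.
\<close>

section \<open>Walks and combinatorial distance\<close>

lemma is_walk_Nil [simp]: "\<not> is_walk E []"
  by (simp add: is_walk_def)

lemma is_walk_singleton [simp]: "is_walk E [x]"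
  by (simp add: is_walk_def)

lemma is_walk_Cons_Cons [simp]: "is_walk E (x # y # p) \<longleftrightarrow> E x y \<and> is_walk E (y # p)"
proof
  assume "is_walk E (x # y # p)"
  then show "E x y \<and> is_walk E (y # p)"
    unfolding is_walk_def
    by (metis Suc_less_eq length_Cons nth_Cons_0 nth_Cons_Suc zero_less_Suc list.distinct(1))
next
  assume "E x y \<and> is_walk E (y # p)"
  then show "is_walk E (x # y # p)"
    unfolding is_walk_def by (auto simp: less_Suc_eq_0_disj)
qed

lemma is_walk_append:
  assumes "p \<noteq> []" "q \<noteq> []"
  shows "is_walk E (p @ q) \<longleftrightarrow> is_walk E p \<and> is_walk E q \<and> E (last p) (hd q)"
  using assms
proof (induction p rule: induct_list012)
  case (3 x y p)
  then show ?case by (cases q) auto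
qed (auto simp: neq_Nil_conv)

lemma is_walk_join:
  assumes "is_walk E p" "is_walk E q" "last p = hd q"
  shows "is_walk E (p @ tl q)"
proof (cases "tl q")
  case (Cons y r)
  moreover have "p \<noteq> []"
    using assms(1) by auto
  ultimately show ?thesis
    using assms by (cases q) (auto simp: is_walk_append)
qed (use assms in simp)

lemma last_join: "q \<noteq> [] \<Longrightarrow> last p = hd q \<Longrightarrow> last (p @ tl q) = last q"
  by (cases q) auto

lemma set_join_subset: "set (p @ tl q) \<subseteq> set p \<union> set q"
  by (cases q) auto

lemma is_path_walk: "is_path E p \<Longrightarrow> is_walk E p"
  by (simp add: is_path_def)

lemma is_walk_take: "is_walk E p \<Longrightarrow> 0 < n \<Longrightarrow> is_walk E (take n p)"
  unfolding is_walk_def by auto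

lemma is_walk_drop: "is_walk E p \<Longrightarrow> n < length p \<Longrightarrow> is_walk E (drop n p)"
  unfolding is_walk_def by auto

lemma is_walk_map: "(\<And>u v. E u v \<Longrightarrow> E (f u) (f v)) \<Longrightarrow> is_walk E p \<Longrightarrow> is_walk E (map f p)"
  unfolding is_walk_def by auto

lemma is_walk_rev:
  assumes "\<And>u v. E u v \<Longrightarrow> E v u" and "is_walk E p"
  shows "is_walk E (rev p)"
  using assms(2)
proof (induction p rule: induct_list012)
  case (3 x y p)
  then have "is_walk E (rev (y # p) @ [x])"
    using assms(1) by (subst is_walk_append) (auto simp: last_rev)
  then show ?case
    by simp
qed simp_all

lemma tdist_less_length:
  assumes "is_walk E p"
  shows "tdist E (hd p) (last p) < length p"
proof -
  have "length p = Suc (length p - 1)"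
    using assms by (cases p) auto
  then have "tdist E (hd p) (last p) \<le> length p - 1"
    unfolding tdist_def using assms by (intro Least_le) auto
  then show ?thesis
    using assms by (cases p) auto
qed

lemma tdist_self [simp]: "tdist E u u = 0"
  using tdist_less_length[of E "[u]"] by simp

lemma tdist_hd_less_length:
  assumes "is_walk E p" "x \<in> set p"
  shows "tdist E (hd p) x < length p"
proof -
  obtain i where i: "i < length p" "p ! i = x"
    using assms(2) by (auto simp: in_set_conv_nth)
  have "tdist E (hd (take (Suc i) p)) (last (take (Suc i) p)) < length (take (Suc i) p)"
    using assms(1) by (intro tdist_less_length is_walk_take) auto
  moreover have "hd (take (Suc i) p) = hd p"
    using i by (cases p) auto
  moreover have "last (take (Suc i) p) = x"
    using i by (simp add: take_Suc_conv_app_nth)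
  ultimately show ?thesis
    using i by simp
qed

lemma tdist_last_less_length:
  assumes "is_walk E p" "x \<in> set p"
  shows "tdist E x (last p) < length p"
proof -
  obtain i where i: "i < length p" "p ! i = x"
    using assms(2) by (auto simp: in_set_conv_nth)
  have "tdist E (hd (drop i p)) (last (drop i p)) < length (drop i p)"
    using assms(1) i by (intro tdist_less_length is_walk_drop) auto
  then show ?thesis
    using i by (simp add: hd_drop_conv_nth)
qed

lemma walk_contains_path:
  "is_walk E w \<Longrightarrow> \<exists>p. is_path E p \<and> hd p = hd w \<and> last p = last w \<and> set p \<subseteq> set w"
proof (induction w rule: induct_list012)
  case (2 x)
  then show ?case by (intro exI[of _ "[x]"]) (simp add: is_path_def)
next
  case (3 x y w)
  then obtain p where p: "is_path E p" "hd p = y" "last p = last (y # w)" "set p \<subseteq> set (y # w)"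
    by auto
  show ?case
  proof (cases "x \<in> set p")
    case True
    then obtain p1 p2 where p12: "p = p1 @ x # p2"
      by (meson split_list)
    have "is_walk E (x # p2)"
      using p(1) p12 by (cases "p1 = []") (auto simp: is_path_def is_walk_append)
    then show ?thesis
      using p p12 by (intro exI[of _ "x # p2"]) (auto simp: is_path_def)
  next
    case False
    then have "is_path E (x # p)"
      using p 3 by (cases p) (auto simp: is_path_def)
    then show ?thesis
      using p by (intro exI[of _ "x # p"]) (auto simp: is_path_def dest: hd_in_set)
  qed
qed simp

lemma biinf_geodesic_tdist: "biinf_geodesic E f \<Longrightarrow> tdist E (f i) (f j) = nat \<bar>i - j\<bar>"
  by (simp add: biinf_geodesic_def)

lemma biinf_geodesic_inj:
  assumes "biinf_geodesic E f"
  shows "inj f"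
proof (rule injI)
  fix i j
  assume "f i = f j"
  then have "nat \<bar>i - j\<bar> = 0"
    using biinf_geodesic_tdist[OF assms, of i j] by simp
  then show "i = j"
    by simp
qed

lemma biinf_geodesic_reflect: "biinf_geodesic E f \<Longrightarrow> biinf_geodesic E (\<lambda>i. f (- i))"
  by (simp add: biinf_geodesic_def abs_minus_commute)

section \<open>Uniqueness of paths in trees\<close>

locale simplicial_tree =
  fixes E :: "'v \<Rightarrow> 'v \<Rightarrow> bool"
  assumes tree_graph: "tree_graph E"
begin

lemma edge_sym: "E u v \<Longrightarrow> E v u"
  using tree_graph by (simp add: tree_graph_def)

lemma no_cycle: "is_path E p \<Longrightarrow> 3 \<le> length p \<Longrightarrow> \<not> E (last p) (hd p)"
  using tree_graph by (auto simp: tree_graph_def)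

lemma shortest_walk:
  obtains p where "is_walk E p" "hd p = u" "last p = v" "length p = Suc (tdist E u v)"
proof -
  obtain p where p: "is_walk E p" "hd p = u" "last p = v"
    using tree_graph unfolding tree_graph_def by blast
  then have "length p = Suc (length p - 1)"
    by (cases p) auto
  with p have "\<exists>n p. is_walk E p \<and> hd p = u \<and> last p = v \<and> length p = Suc n"
    by blast
  then have "\<exists>p. is_walk E p \<and> hd p = u \<and> last p = v \<and> length p = Suc (tdist E u v)"
    unfolding tdist_def by (rule LeastI_ex)
  then show ?thesis
    using that by blast
qed

lemma tdist_sym: "tdist E u v = tdist E v u"
proof -
  have "tdist E v u \<le> tdist E u v" for u v
  proof -
    obtain p where p: "is_walk E p" "hd p = u" "last p = v" "length p = Suc (tdist E u v)"
      by (rule shortest_walk)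
    then have "tdist E (hd (rev p)) (last (rev p)) < length (rev p)"
      by (intro tdist_less_length is_walk_rev[of E, OF edge_sym])
    then show ?thesis
      using p by (simp add: hd_rev last_rev)
  qed
  then show ?thesis
    by (metis le_antisym)
qed

lemma tdist_triangle: "tdist E u w \<le> tdist E u v + tdist E v w"
proof -
  obtain p where p: "is_walk E p" "hd p = u" "last p = v" "length p = Suc (tdist E u v)"
    by (rule shortest_walk)
  obtain q where q: "is_walk E q" "hd q = v" "last q = w" "length q = Suc (tdist E v w)"
    by (rule shortest_walk)
  have "tdist E (hd (p @ tl q)) (last (p @ tl q)) < length (p @ tl q)"
    using p q by (intro tdist_less_length is_walk_join) auto
  moreover have "p \<noteq> []" "q \<noteq> []"
    using p q by auto
  ultimately show ?thesis
    using p q by (auto simp: last_join)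
qed

lemma tdist_eq_1_edge: "tdist E u v = 1 \<Longrightarrow> E u v"
  by (rule shortest_walk[of u v]) (auto simp: length_Suc_conv)

lemma path_unique:
  "is_path E p \<Longrightarrow> is_path E q \<Longrightarrow> hd p = hd q \<Longrightarrow> last p = last q \<Longrightarrow> p = q"
proof (induction p arbitrary: q)
  case Nil
  then show ?case by (simp add: is_path_def)
next
  case (Cons x p)
  obtain q' where q: "q = x # q'"
    using Cons.prems by (cases q) (auto simp: is_path_def)
  have last_eq: "last (x # p) = last (x # q')"
    using Cons.prems q by simp
  have fresh: "x \<notin> set p" "x \<notin> set q'"
    using Cons.prems q by (auto simp: is_path_def)
  have paths: "p \<noteq> [] \<Longrightarrow> is_path E p" "q' \<noteq> [] \<Longrightarrow> is_path E q'"
    using Cons.prems q by (auto simp: is_path_def neq_Nil_conv)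
  have "p = [] \<longleftrightarrow> q' = []"
    using last_eq fresh by (metis last_ConsL last_ConsR last_in_set)
  show ?case
  proof (cases "p = []")
    case False
    with \<open>p = [] \<longleftrightarrow> q' = []\<close> have ne: "p \<noteq> []" "q' \<noteq> []"
      by simp_all
    then have ends: "last p = last q'"
      using last_eq by simp
    show ?thesis
    proof (cases "hd p = hd q'")
      case True
      then show ?thesis
        using Cons.IH[OF paths] ne ends q by simp
    next
      case False
      \<comment> \<open>Going out along p and back along q' avoids x, and closes a cycle through x.\<close>
      have "is_walk E (p @ tl (rev q'))"
        using ne paths ends fresh
        by (intro is_walk_join is_walk_rev[of E, OF edge_sym]) (auto simp: is_path_def hd_rev)
      then obtain r where r: "is_path E r" "hd r = hd p" "last r = hd q'" "x \<notin> set r"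
        using walk_contains_path ne ends fresh set_join_subset[of p "rev q'"]
        by (fastforce simp: last_join hd_rev last_rev)
      have "2 \<le> length r"
        using r False by (cases r rule: remdups_adj.cases) (auto simp: is_path_def)
      moreover have "is_path E (x # r)"
        using r Cons.prems(1) ne fresh by (cases r) (auto simp: is_path_def neq_Nil_conv)
      moreover have "E (hd q') x"
        using Cons.prems(2) q ne edge_sym by (auto simp: is_path_def neq_Nil_conv)
      ultimately show ?thesis
        using no_cycle[of "x # r"] r by (auto split: if_splits)
    qed
  qed (use \<open>p = [] \<longleftrightarrow> q' = []\<close> q in simp)
qed

lemma path_subset_walk:
  assumes "is_walk E w" "is_path E p" "hd p = hd w" "last p = last w"
  shows "set p \<subseteq> set w"
proof -
  obtain q where "is_path E q" "hd q = hd w" "last q = last w" "set q \<subseteq> set w"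
    using walk_contains_path[OF assms(1)] by blast
  with assms path_unique[of p q] show ?thesis
    by simp
qed

lemma path_vertex_on_middle_walk:
  assumes "is_path E P" "is_walk E A" "is_walk E M" "is_walk E B"
    and "hd A = hd P" "last A = hd M" "last M = hd B" "last B = last P"
    and "x \<in> set P" "length A \<le> tdist E (hd P) x" "length B \<le> tdist E x (last P)"
  shows "x \<in> set M"
proof -
  let ?W = "(A @ tl M) @ tl B"
  have ne: "A \<noteq> []" "M \<noteq> []" "B \<noteq> []"
    using assms(2-4) by auto
  have AM: "is_walk E (A @ tl M)" "last (A @ tl M) = hd B"
    using assms ne by (simp_all add: is_walk_join last_join)
  have "is_walk E ?W"
    using AM assms by (intro is_walk_join)
  moreover have "hd ?W = hd P"
    using assms ne by simp
  moreover have "last ?W = last P"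
    using last_join[OF ne(3) AM(2)] assms(8) by simp
  ultimately have "x \<in> set ?W"
    using path_subset_walk[of ?W P] assms(1,9) by auto
  moreover have "x \<notin> set A"
  proof
    assume "x \<in> set A"
    then show False
      using tdist_hd_less_length[OF assms(2)] assms(5,10) by fastforce
  qed
  moreover have "x \<notin> set B"
  proof
    assume "x \<in> set B"
    then show False
      using tdist_last_less_length[OF assms(4)] assms(8,11) by fastforce
  qed
  ultimately show ?thesis
    using set_join_subset[of A M] set_join_subset[of "A @ tl M" B] by blast
qed

lemma biinf_geodesic_segment:
  assumes "biinf_geodesic E f" "i \<le> j"
  shows "is_path E (map f [i..j])" "hd (map f [i..j]) = f i" "last (map f [i..j]) = f j"
proof -
  show "hd (map f [i..j]) = f i"
    using assms(2) by (simp add: hd_map hd_conv_nth nth_upto)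
  show "last (map f [i..j]) = f j"
    using assms(2) by (simp add: last_map last_conv_nth nth_upto)
  have "E (f (i + int n)) (f (i + int (Suc n)))" for n
    using biinf_geodesic_tdist[OF assms(1), of "i + int n" "i + int (Suc n)"]
    by (intro tdist_eq_1_edge) simp
  then have "is_walk E (map f [i..j])"
    using assms(2) by (auto simp: is_walk_def nth_upto simp del: of_nat_Suc)
  moreover have "distinct (map f [i..j])"
    using biinf_geodesic_inj[OF assms(1)] by (simp add: distinct_map inj_on_subset[of f UNIV])
  ultimately show "is_path E (map f [i..j])"
    by (simp add: is_path_def)
qed

lemma biinf_geodesics_coincide_forward:
  assumes f: "biinf_geodesic E f" and f': "biinf_geodesic E f'"
    and "i1 \<le> i2" "j1 \<le> j2" "f i1 = f' j1" "f i2 = f' j2" "0 \<le> t" "t \<le> i2 - i1"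
  shows "f (i1 + t) = f' (j1 + t)"
proof -
  have "map f [i1..i2] = map f' [j1..j2]"
    using assms biinf_geodesic_segment[OF f] biinf_geodesic_segment[OF f']
    by (intro path_unique) simp_all
  then have "map f [i1..i2] ! nat t = map f' [j1..j2] ! nat t"
    by simp
  moreover have "j2 - j1 = i2 - i1"
    using biinf_geodesic_tdist[OF f, of i1 i2] biinf_geodesic_tdist[OF f', of j1 j2] assms by simp
  ultimately show ?thesis
    using assms by simp
qed

lemma biinf_geodesics_coincide:
  assumes f: "biinf_geodesic E f" and f': "biinf_geodesic E f'"
    and "i1 \<le> i2" "f i1 = f' j1" "f i2 = f' j2"
  obtains s :: int where "\<bar>s\<bar> = 1" "\<And>t. 0 \<le> t \<Longrightarrow> t \<le> i2 - i1 \<Longrightarrow> f (i1 + t) = f' (j1 + s * t)"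
proof (cases "j1 \<le> j2")
  case True
  then show ?thesis
    using that[of 1] biinf_geodesics_coincide_forward[OF f f'] assms by simp
next
  case False
  then show ?thesis
    using that[of "-1"] assms
      biinf_geodesics_coincide_forward[OF f biinf_geodesic_reflect[OF f'], of i1 i2 "- j1" "- j2"]
    by simp
qed

end

section \<open>Group actions on trees\<close>

locale tree_group_action = simplicial_tree E for E :: "'v \<Rightarrow> 'v \<Rightarrow> bool" +
  fixes G :: "('g, 'b) monoid_scheme" and \<phi> :: "'g \<Rightarrow> 'v \<Rightarrow> 'v"
  assumes tree_action: "tree_action G E \<phi>"
begin

sublocale group G
  using tree_action by (simp add: tree_action_def)

lemma act_edge: "g \<in> carrier G \<Longrightarrow> E u v \<Longrightarrow> E (\<phi> g u) (\<phi> g v)"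
  using tree_action by (simp add: tree_action_def)

lemma act_one [simp]: "\<phi> \<one>\<^bsub>G\<^esub> v = v"
  using tree_action by (simp add: tree_action_def)

lemma act_mult: "g \<in> carrier G \<Longrightarrow> h \<in> carrier G \<Longrightarrow> \<phi> (g \<otimes>\<^bsub>G\<^esub> h) v = \<phi> g (\<phi> h v)"
  using tree_action by (simp add: tree_action_def)

lemma act_inv_act [simp]: "g \<in> carrier G \<Longrightarrow> \<phi> (inv\<^bsub>G\<^esub> g) (\<phi> g v) = v"
  by (metis act_mult act_one inv_closed l_inv)

lemma tdist_act_le:
  assumes g: "g \<in> carrier G"
  shows "tdist E (\<phi> g u) (\<phi> g v) \<le> tdist E u v"
proof -
  obtain p where p: "is_walk E p" "hd p = u" "last p = v" "length p = Suc (tdist E u v)"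
    by (rule shortest_walk)
  have "tdist E (hd (map (\<phi> g) p)) (last (map (\<phi> g) p)) < length (map (\<phi> g) p)"
    using p(1) act_edge[OF g] by (intro tdist_less_length is_walk_map)
  moreover have "p \<noteq> []"
    using p(1) by auto
  ultimately show ?thesis
    using p by (simp add: hd_map last_map)
qed

lemma tdist_act [simp]: "g \<in> carrier G \<Longrightarrow> tdist E (\<phi> g u) (\<phi> g v) = tdist E u v"
  using tdist_act_le[of g u v] tdist_act_le[of "inv\<^bsub>G\<^esub> g" "\<phi> g u" "\<phi> g v"] by simp

lemma act_int_pow_shift:
  assumes g: "g \<in> carrier G" and shift: "\<forall>i. \<phi> g (f i) = f (i + k)"
  shows "\<phi> (g [^]\<^bsub>G\<^esub> (m::int)) (f i) = f (i + m * k)"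
proof -
  have step: "\<phi> (g [^]\<^bsub>G\<^esub> (m + 1)) (f i) = \<phi> (g [^]\<^bsub>G\<^esub> m) (f (i + k))" for m :: int and i
    using g shift int_pow_mult[OF g, of m 1] by (simp add: act_mult)
  have "\<forall>i. \<phi> (g [^]\<^bsub>G\<^esub> m) (f i) = f (i + m * k)"
  proof (induction m rule: int_induct[where k = 0])
    case (step1 m)
    show ?case
    proof
      fix i
      have "\<phi> (g [^]\<^bsub>G\<^esub> (m + 1)) (f i) = f (i + k + m * k)"
        using step step1 by simp
      then show "\<phi> (g [^]\<^bsub>G\<^esub> (m + 1)) (f i) = f (i + (m + 1) * k)"
        by (simp add: algebra_simps)
    qed
  next
    case (step2 m)
    show ?case
    proof
      fix i
      have "\<phi> (g [^]\<^bsub>G\<^esub> (m - 1)) (f (i - k + k)) = f (i - k + m * k)"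
        using step[of "m - 1" "i - k"] step2 by simp
      then show "\<phi> (g [^]\<^bsub>G\<^esub> (m - 1)) (f i) = f (i + (m - 1) * k)"
        by (simp add: algebra_simps)
    qed
  qed simp
  then show ?thesis ..
qed

lemma tdist_act_pow_le:
  assumes g: "g \<in> carrier G"
  shows "tdist E v (\<phi> (g [^]\<^bsub>G\<^esub> (n::nat)) v) \<le> n * tdist E v (\<phi> g v)"
proof (induction n)
  case (Suc n)
  let ?a = "g [^]\<^bsub>G\<^esub> n"
  have "tdist E v (\<phi> ?a (\<phi> g v)) \<le> tdist E v (\<phi> ?a v) + tdist E (\<phi> ?a v) (\<phi> ?a (\<phi> g v))"
    by (rule tdist_triangle)
  also have "\<dots> \<le> n * tdist E v (\<phi> g v) + tdist E v (\<phi> g v)"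
    using Suc.IH g by simp
  finally show ?case
    using g by (simp add: act_mult)
qed simp

lemma shift_le_displacement:
  assumes g: "g \<in> carrier G" and f: "biinf_geodesic E f"
    and shift: "\<forall>i. \<phi> g (f i) = f (i + k)" and k: "0 < k"
  shows "k \<le> int (tdist E v (\<phi> g v))"
proof (rule ccontr)
  define d where "d = tdist E v (\<phi> g v)"
  define c where "c = tdist E (f 0) v"
  define n where "n = 2 * c + 1"
  let ?a = "g [^]\<^bsub>G\<^esub> n"
  assume "\<not> k \<le> int (tdist E v (\<phi> g v))"
  then have "int n * (int d + 1) \<le> int n * k"
    unfolding d_def by (intro mult_left_mono) auto
  \<comment> \<open>g^n moves f 0 by n k, but moves v, at distance c from f 0, by at most n d.\<close>
  moreover have "int n * k = int (tdist E (f 0) (\<phi> ?a (f 0)))"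
    using act_int_pow_shift[OF g shift, of "int n" 0] biinf_geodesic_tdist[OF f, of 0 "int n * k"] k
    by (simp add: int_pow_int)
  moreover have
    "tdist E (f 0) (\<phi> ?a (f 0)) \<le> c + tdist E v (\<phi> ?a v) + tdist E (\<phi> ?a v) (\<phi> ?a (f 0))"
    unfolding c_def by (meson add_mono_thms_linordered_semiring(3) le_trans tdist_triangle)
  moreover have "tdist E (\<phi> ?a v) (\<phi> ?a (f 0)) = c"
    unfolding c_def using g by (simp add: tdist_sym)
  moreover have "tdist E v (\<phi> ?a v) \<le> n * d"
    unfolding d_def using g by (rule tdist_act_pow_le)
  ultimately have "int n * k \<le> int (2 * c + n * d)"
    by linarith
  with \<open>int n * (int d + 1) \<le> int n * k\<close> have "int n * (int d + 1) \<le> 2 * int c + int n * int d"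
    by simp
  then show False
    unfolding n_def by (simp add: algebra_simps)
qed

lemma transl_len_eq_shift:
  assumes g: "g \<in> carrier G" and f: "biinf_geodesic E f"
    and shift: "\<forall>i. \<phi> g (f i) = f (i + k)" and k: "0 < k"
  shows "int (transl_len E \<phi> g) = k"
proof -
  have "transl_len E \<phi> g = nat k"
    unfolding transl_len_def
  proof (rule Least_equality)
    show "\<exists>v. tdist E v (\<phi> g v) = nat k"
      using shift biinf_geodesic_tdist[OF f, of 0 k] k by (intro exI[of _ "f 0"]) simp
    show "nat k \<le> n" if "\<exists>v. tdist E v (\<phi> g v) = n" for n
      using that shift_le_displacement[OF assms] by (auto simp: nat_le_iff)
  qed
  then show ?thesis
    using k by simp
qed

lemma shifted_geodesic_range_subset:
  assumes g: "g \<in> carrier G" and k: "0 < k"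
    and f1: "biinf_geodesic E f1" and shift1: "\<forall>i. \<phi> g (f1 i) = f1 (i + k)"
    and f2: "biinf_geodesic E f2" and shift2: "\<forall>i. \<phi> g (f2 i) = f2 (i + k)"
  shows "range f1 \<subseteq> range f2"
proof
  fix x
  assume "x \<in> range f1"
  then obtain j where x: "x = f1 j"
    by blast
  define c where "c = tdist E (f1 0) (f2 0)"
  define N where "N = \<bar>j\<bar> + int c + 1"
  define m where "m = N * k"
  have far: "\<bar>j\<bar> + int c + 1 \<le> m"
    unfolding m_def N_def using mult_left_mono[of 1 k "\<bar>j\<bar> + int c + 1"] k by simp
  \<comment> \<open>Powers of g carry the pair f1 0, f2 0 to parameter \<plusminus>m, still at distance c;
    so the path along f1 between these parameters runs along f2 away from its ends.\<close>
  have ends: "tdist E (f1 (- m)) (f2 (- m)) = c" "tdist E (f2 m) (f1 m) = c"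
    using tdist_act[OF int_pow_closed[OF g], of "- N" "f1 0" "f2 0"]
      tdist_act[OF int_pow_closed[OF g], of N "f2 0" "f1 0"]
      act_int_pow_shift[OF g shift1, of _ 0] act_int_pow_shift[OF g shift2, of _ 0]
    unfolding c_def m_def by (simp_all add: tdist_sym)
  obtain A where A: "is_walk E A" "hd A = f1 (- m)" "last A = f2 (- m)" "length A = Suc c"
    using shortest_walk ends(1) by metis
  obtain B where B: "is_walk E B" "hd B = f2 m" "last B = f1 m" "length B = Suc c"
    using shortest_walk ends(2) by metis
  have "- m \<le> m"
    using far by simp
  note P = biinf_geodesic_segment[OF f1 this] and M = biinf_geodesic_segment[OF f2 this]
  have "x \<in> set (map f2 [- m..m])"
  proof (rule path_vertex_on_middle_walk[OF P(1) A(1) is_path_walk[OF M(1)] B(1)])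
    have "j \<in> {- m..m}"
      using far by auto
    then show "x \<in> set (map f1 [- m..m])"
      using x by simp
    show "length A \<le> tdist E (hd (map f1 [- m..m])) x"
      and "length B \<le> tdist E x (last (map f1 [- m..m]))"
      using A B far x P biinf_geodesic_tdist[OF f1] by auto
  qed (use A B P M in auto)
  then show "x \<in> range f2"
    by auto
qed

lemma axis_eq_range:
  assumes g: "g \<in> carrier G" and f: "translates_along E \<phi> g f"
  shows "axis E \<phi> g = range f"
proof
  show "range f \<subseteq> axis E \<phi> g"
    unfolding axis_def using f by blast
next
  obtain k where k: "biinf_geodesic E f" "0 < k" "\<forall>i. \<phi> g (f i) = f (i + k)"
    using f unfolding translates_along_def by blast
  have "range f' \<subseteq> range f" if f': "translates_along E \<phi> g f'" for f'
  proof -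
    obtain k' where k': "biinf_geodesic E f'" "0 < k'" "\<forall>i. \<phi> g (f' i) = f' (i + k')"
      using f' unfolding translates_along_def by blast
    have "k' = k"
      using transl_len_eq_shift[OF g k'(1,3,2)] transl_len_eq_shift[OF g k(1,3,2)] by simp
    then show ?thesis
      using shifted_geodesic_range_subset[OF g k(2) k'(1)] k k'(3) by simp
  qed
  then show "axis E \<phi> g \<subseteq> range f"
    unfolding axis_def by blast
qed

lemma loxodromic_axis:
  assumes "loxodromic G E \<phi> g"
  obtains f where "biinf_geodesic E f" "\<forall>i. \<phi> g (f i) = f (i + int (transl_len E \<phi> g))"
    "0 < transl_len E \<phi> g" "axis E \<phi> g = range f"
proof -
  obtain f k where g: "g \<in> carrier G" and f: "translates_along E \<phi> g f"
    and k: "biinf_geodesic E f" "0 < k" "\<forall>i. \<phi> g (f i) = f (i + k)"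
    using assms unfolding loxodromic_def translates_along_def by blast
  then have "int (transl_len E \<phi> g) = k"
    by (intro transl_len_eq_shift)
  then show ?thesis
    using that k axis_eq_range[OF g f] by simp
qed

lemma acylindrical_fixer_trivial:
  assumes acyl: "acylindrical G E \<phi> \<kappa>" and f: "biinf_geodesic E f" and c: "c \<in> carrier G"
    and fixed: "\<And>t. 0 \<le> t \<Longrightarrow> t \<le> int \<kappa> + 1 \<Longrightarrow> \<phi> c (f (i + t)) = f (i + t)"
  shows "c = \<one>\<^bsub>G\<^esub>"
proof -
  let ?p = "map f [i..i + int \<kappa> + 1]"
  have "is_path E ?p" "\<kappa> + 2 \<le> length ?p"
    using biinf_geodesic_segment[OF f] by simp_all
  then have "{c \<in> carrier G. \<forall>v\<in>set ?p. \<phi> c v = v} = {\<one>\<^bsub>G\<^esub>}"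
    using acyl unfolding acylindrical_def by blast
  moreover have "\<forall>v\<in>set ?p. \<phi> c v = v"
    using fixed[of "_ - i"] by auto
  ultimately show ?thesis
    using c by blast
qed

lemma long_overlap_common_power:
  fixes lg lh :: nat
  assumes acyl: "acylindrical G E \<phi> \<kappa>"
    and g: "g \<in> carrier G" and f: "biinf_geodesic E f"
    and shift_g: "\<forall>i. \<phi> g (f i) = f (i + int lg)"
    and h: "h \<in> carrier G" and f': "biinf_geodesic E f'"
    and shift_h: "\<forall>i. \<phi> h (f' i) = f' (i + int lh)"
    and pos: "0 < lg" "0 < lh"
    and overlap: "\<And>t. 0 \<le> t \<Longrightarrow> t \<le> D \<Longrightarrow> f (i + t) = f' (j + s * t)"
    and long: "int \<kappa> + int lg * int lh < D"
  shows "g [^]\<^bsub>G\<^esub> int lh = h [^]\<^bsub>G\<^esub> (s * int lg) \<and> g [^]\<^bsub>G\<^esub> int lh \<noteq> \<one>\<^bsub>G\<^esub>"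
proof -
  define a where "a = g [^]\<^bsub>G\<^esub> int lh"
  define b where "b = h [^]\<^bsub>G\<^esub> (s * int lg)"
  let ?L = "int lg * int lh"
  have L0: "0 \<le> ?L"
    by simp
  have ab: "a \<in> carrier G" "b \<in> carrier G"
    unfolding a_def b_def using g h by simp_all
  \<comment> \<open>Both a and b shift the overlap by ?L in the same direction.\<close>
  have agree: "\<phi> a (f (i + t)) = \<phi> b (f (i + t))" if t: "0 \<le> t" "t \<le> D - ?L" for t
  proof -
    have "\<phi> a (f (i + t)) = f (i + (t + ?L))"
      unfolding a_def using act_int_pow_shift[OF g shift_g] by (simp add: algebra_simps)
    also have "\<dots> = f' (j + s * t + s * ?L)"
      using overlap[of "t + ?L"] t by (simp add: algebra_simps)
    also have "\<dots> = \<phi> b (f' (j + s * t))"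
      unfolding b_def using act_int_pow_shift[OF h shift_h] by (simp add: algebra_simps)
    also have "\<dots> = \<phi> b (f (i + t))"
      using overlap[of t] t L0 by simp
    finally show ?thesis .
  qed
  have "\<phi> (inv\<^bsub>G\<^esub> b \<otimes>\<^bsub>G\<^esub> a) (f (i + t)) = f (i + t)" if "0 \<le> t" "t \<le> int \<kappa> + 1" for t
    using agree[of t] that long ab by (simp add: act_mult)
  then have "inv\<^bsub>G\<^esub> b \<otimes>\<^bsub>G\<^esub> a = \<one>\<^bsub>G\<^esub>"
    using ab by (intro acylindrical_fixer_trivial[OF acyl f]) simp_all
  then have "a = b"
    using inv_solve_left'[OF one_closed ab(2) ab(1)] ab by simp
  moreover have "\<phi> a (f i) \<noteq> f i"
    unfolding a_def using act_int_pow_shift[OF g shift_g, of "int lh" i] pos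
    by (simp add: inj_eq biinf_geodesic_inj[OF f])
  ultimately show ?thesis
    unfolding a_def b_def by auto
qed

lemma common_axis_points_close:
  fixes lg lh :: nat
  assumes acyl: "acylindrical G E \<phi> \<kappa>"
    and g: "g \<in> carrier G" and f: "biinf_geodesic E f"
    and shift_g: "\<forall>i. \<phi> g (f i) = f (i + int lg)"
    and h: "h \<in> carrier G" and f': "biinf_geodesic E f'"
    and shift_h: "\<forall>i. \<phi> h (f' i) = f' (i + int lh)"
    and pos: "0 < lg" "0 < lh"
    and no_power: "\<not> (\<exists>(m::int) (n::int). g [^]\<^bsub>G\<^esub> m = h [^]\<^bsub>G\<^esub> n \<and> g [^]\<^bsub>G\<^esub> m \<noteq> \<one>\<^bsub>G\<^esub>)"
    and common: "f i1 = f' j1" "f i2 = f' j2"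
  shows "tdist E (f i1) (f i2) \<le> \<kappa> + lg * lh"
proof -
  have "i2 - i1 \<le> int \<kappa> + int lg * int lh"
    if ij: "i1 \<le> i2" "f i1 = f' j1" "f i2 = f' j2" for i1 i2 j1 j2
  proof (rule ccontr)
    assume "\<not> ?thesis"
    then have long: "int \<kappa> + int lg * int lh < i2 - i1"
      by simp
    obtain s where "\<And>t. 0 \<le> t \<Longrightarrow> t \<le> i2 - i1 \<Longrightarrow> f (i1 + t) = f' (j1 + s * t)"
      using biinf_geodesics_coincide[OF f f' ij] by blast
    then show False
      using long_overlap_common_power[OF acyl g f shift_g h f' shift_h pos _ long] no_power
      by blast
  qed
  then show ?thesis
    using common biinf_geodesic_tdist[OF f, of i1 i2]
    by (cases "i1 \<le> i2") (force simp: nat_le_iff)+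
qed

end

theorem lemma2p6:
  fixes G :: "('g, 'b) monoid_scheme" and E :: "'v \<Rightarrow> 'v \<Rightarrow> bool"
    and \<phi> :: "'g \<Rightarrow> 'v \<Rightarrow> 'v" and \<kappa> :: nat and g h :: 'g
  assumes "tree_action G E \<phi>"
    and "torsion_free G"
    and "acylindrical G E \<phi> \<kappa>"
    and "loxodromic G E \<phi> g" and "loxodromic G E \<phi> h"
    and "\<not> (\<exists>(m::int) (n::int). g [^]\<^bsub>G\<^esub> m = h [^]\<^bsub>G\<^esub> n \<and> g [^]\<^bsub>G\<^esub> m \<noteq> \<one>\<^bsub>G\<^esub>)"
  shows "\<forall>u \<in> axis E \<phi> g \<inter> axis E \<phi> h. \<forall>v \<in> axis E \<phi> g \<inter> axis E \<phi> h.
           tdist E u v \<le> \<kappa> + transl_len E \<phi> g * transl_len E \<phi> h"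
proof -
  interpret tree_group_action E G \<phi>
    using assms(1) by unfold_locales (simp_all add: tree_action_def)
  have g: "g \<in> carrier G" and h: "h \<in> carrier G"
    using assms(4,5) by (simp_all add: loxodromic_def)
  obtain fg where fg: "biinf_geodesic E fg" "\<forall>i. \<phi> g (fg i) = fg (i + int (transl_len E \<phi> g))"
    "0 < transl_len E \<phi> g" "axis E \<phi> g = range fg"
    using assms(4) by (rule loxodromic_axis)
  obtain fh where fh: "biinf_geodesic E fh" "\<forall>i. \<phi> h (fh i) = fh (i + int (transl_len E \<phi> h))"
    "0 < transl_len E \<phi> h" "axis E \<phi> h = range fh"
    using assms(5) by (rule loxodromic_axis)
  note close = common_axis_points_close[OF assms(3) g fg(1,2) h fh(1,2) fg(3) fh(3) assms(6)]
  show ?thesis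
    unfolding fg(4) fh(4)
  proof (intro ballI)
    fix u v
    assume "u \<in> range fg \<inter> range fh" "v \<in> range fg \<inter> range fh"
    then obtain i1 i2 j1 j2 where "u = fg i1" "fg i1 = fh j1" "v = fg i2" "fg i2 = fh j2"
      by (metis IntE rangeE)
    then show "tdist E u v \<le> \<kappa> + transl_len E \<phi> g * transl_len E \<phi> h"
      using close[of i1 j1 i2 j2] by simp
  qed
qed

end
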